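(* Let $G_1$ and $G_2$ be connected bipartite graphs, where $G_i$ has bipartition $(A_i,B_i)$ with $|A_i|,|B_i|\ge 3$, and let $H_1,H_2$ be the graphs obtained from them by the construction described in the context. Then $G_1\simeq G_2$ if and only if $H_1\simeq H_2$.
   Context: All graphs are finite, simple, undirected; $\simeq$ denotes graph isomorphism. Construction: given a bipartite graph $G$ with bipartition $(A,B)$, the graph $H$ has vertex set $A\cup B\cup C$ where $C=\{c_e : e\in E(G)\}$ is a set of new vertices, one per edge of $G$; its edges are: all pairs $ab$ with $a\in A$, $b\in B$ (so $A\cup B$ induces the complete bipartite graph with parts $A,B$), and for each edge $e=ab$ of $G$ ($a\in A$, $b\in B$) the two edges $ac_e$ and $bc_e$. There are no other edges. *)

theory Defs
  imports Main
begin

definition graph :: "'a set \<Rightarrow> 'a set set \<Rightarrow> bool" where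
  "graph V E \<longleftrightarrow> finite V \<and> (\<forall>e\<in>E. \<exists>u v. e = {u, v} \<and> u \<noteq> v \<and> u \<in> V \<and> v \<in> V)"

definition adj :: "'a set set \<Rightarrow> 'a \<Rightarrow> 'a \<Rightarrow> bool" where
  "adj E u v \<longleftrightarrow> {u, v} \<in> E"

definition connected_graph :: "'a set \<Rightarrow> 'a set set \<Rightarrow> bool" where
  "connected_graph V E \<longleftrightarrow> graph V E \<and> (\<forall>u\<in>V. \<forall>v\<in>V. (adj E)\<^sup>*\<^sup>* u v)"

definition bipartite_with :: "'a set \<Rightarrow> 'a set set \<Rightarrow> 'a set \<Rightarrow> 'a set \<Rightarrow> bool" where
  "bipartite_with V E A B \<longleftrightarrow> graph V E \<and> A \<inter> B = {} \<and> A \<union> B = V \<and>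
     (\<forall>e\<in>E. \<exists>a b. a \<in> A \<and> b \<in> B \<and> e = {a, b})"

definition graph_iso :: "'a set \<Rightarrow> 'a set set \<Rightarrow> 'b set \<Rightarrow> 'b set set \<Rightarrow> bool" where
  "graph_iso V1 E1 V2 E2 \<longleftrightarrow> (\<exists>f. bij_betw f V1 V2 \<and>
     (\<forall>u\<in>V1. \<forall>v\<in>V1. {u, v} \<in> E1 \<longleftrightarrow> {f u, f v} \<in> E2))"

text \<open>The construction H: vertices A \<union> B (tagged Inl) and one new vertex c_e = Inr e per edge e.\<close>
definition H_verts :: "'a set \<Rightarrow> 'a set \<Rightarrow> 'a set set \<Rightarrow> ('a + 'a set) set" where
  "H_verts A B E = Inl ` (A \<union> B) \<union> Inr ` E"

definition H_edges :: "'a set \<Rightarrow> 'a set \<Rightarrow> 'a set set \<Rightarrow> ('a + 'a set) set set" where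
  "H_edges A B E = {{Inl a, Inl b} | a b. a \<in> A \<and> b \<in> B}
                 \<union> {{Inl x, Inr e} | x e. e \<in> E \<and> x \<in> e}"

end

theory Submission
  imports Defs
begin

text \<open>
  An isomorphism f of connected bipartite graphs preserves the relation ``x and y lie on the same
  side'' (both sides flip along every edge of a connecting walk), and among original vertices
  this relation is exactly non-adjacency in H; so f lifts to H by sending c_e to c_(f e).
  Conversely, when both sides have at least three vertices, the original vertices of H are
  exactly its vertices of degree at least three, since c_ab is adjacent only to a and b.
  Two original vertices x \<noteq> y are adjacent in G iff they have a common neighbour of degree
  less than three in H, namely c_xy. Both descriptions are isomorphism invariants, so an
  isomorphism of H restricts to an isomorphism of G.
\<close>

definition graph_iso_map :: "('a \<Rightarrow> 'b) \<Rightarrow> 'a set \<Rightarrow> 'a set set \<Rightarrow> 'b set \<Rightarrow> 'b set set \<Rightarrow> bool" where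
  "graph_iso_map h V1 E1 V2 E2 \<longleftrightarrow>
     bij_betw h V1 V2 \<and> (\<forall>u\<in>V1. \<forall>v\<in>V1. {u, v} \<in> E1 \<longleftrightarrow> {h u, h v} \<in> E2)"

lemma graph_iso_iff_graph_iso_map: "graph_iso V1 E1 V2 E2 \<longleftrightarrow> (\<exists>h. graph_iso_map h V1 E1 V2 E2)"
  unfolding graph_iso_def graph_iso_map_def ..

lemma graph_iso_mapD:
  assumes "graph_iso_map h V1 E1 V2 E2"
  shows "bij_betw h V1 V2" and "\<And>u v. u \<in> V1 \<Longrightarrow> v \<in> V1 \<Longrightarrow> {h u, h v} \<in> E2 \<longleftrightarrow> {u, v} \<in> E1"
  using assms unfolding graph_iso_map_def by blast+

lemma bij_betw_map_sum:
  assumes "bij_betw f A A'" and "bij_betw g B B'"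
  shows "bij_betw (map_sum f g) (Inl ` A \<union> Inr ` B) (Inl ` A' \<union> Inr ` B')"
proof -
  have "bij_betw (map_sum f g) (Inl ` A) (Inl ` A')"
    using assms(1) by (auto simp: bij_betw_def inj_on_def image_image)
  moreover have "bij_betw (map_sum f g) (Inr ` B) (Inr ` B')"
    using assms(2) by (auto simp: bij_betw_def inj_on_def image_image)
  ultimately show ?thesis by (rule bij_betw_combine) blast
qed

lemma graph_edge_cases:
  assumes "graph V E" and "e \<in> E"
  obtains u v where "e = {u, v}" "u \<noteq> v" "u \<in> V" "v \<in> V"
  using assms unfolding graph_def by blast

lemma graph_singleton_notin_edges: "graph V E \<Longrightarrow> {v} \<notin> E"
  unfolding graph_def by (auto simp: doubleton_eq_iff)

lemma graph_iso_map_image_edges: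
  assumes "graph V1 E1" and "graph V2 E2" and iso: "graph_iso_map f V1 E1 V2 E2"
  shows "image f ` E1 = E2"
proof (intro equalityI subsetI)
  fix e' assume "e' \<in> image f ` E1"
  then obtain e where "e \<in> E1" "e' = f ` e" by blast
  moreover from \<open>e \<in> E1\<close> assms(1) obtain u v where "e = {u, v}" "u \<in> V1" "v \<in> V1"
    by (elim graph_edge_cases)
  ultimately show "e' \<in> E2" using graph_iso_mapD(2)[OF iso] by simp
next
  fix e' assume "e' \<in> E2"
  with assms(2) obtain u' v' where "e' = {u', v'}" "u' \<in> V2" "v' \<in> V2" by (elim graph_edge_cases)
  moreover obtain u v where "u \<in> V1" "v \<in> V1" "u' = f u" "v' = f v"
    using calculation graph_iso_mapD(1)[OF iso] bij_betw_imp_surj_on by (metis imageE)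
  ultimately have "{u, v} \<in> E1" "e' = f ` {u, v}"
    using graph_iso_mapD(2)[OF iso] \<open>e' \<in> E2\<close> by simp_all
  then show "e' \<in> image f ` E1" by blast
qed

lemma bipartite_withD:
  assumes "bipartite_with V E A B"
  shows "graph V E" and "A \<inter> B = {}" and "V = A \<union> B"
  using assms unfolding bipartite_with_def by simp_all

lemma bipartite_with_edgeE:
  assumes "bipartite_with V E A B" and "e \<in> E"
  obtains a b where "a \<in> A" and "b \<in> B" and "e = {a, b}"
  using assms unfolding bipartite_with_def by blast

lemma bipartite_with_edge_crosses:
  assumes "bipartite_with V E A B" and "{x, y} \<in> E"
  shows "x \<in> A \<longleftrightarrow> y \<notin> A"
proof -
  obtain a b where "a \<in> A" "b \<in> B" "{x, y} = {a, b}"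
    using assms by (rule bipartite_with_edgeE)
  with bipartite_withD(2)[OF assms(1)] show ?thesis by (auto simp: doubleton_eq_iff)
qed

lemma graph_iso_map_same_side:
  assumes b1: "bipartite_with V1 E1 A1 B1" and c1: "connected_graph V1 E1"
    and b2: "bipartite_with V2 E2 A2 B2" and iso: "graph_iso_map f V1 E1 V2 E2"
    and "u \<in> V1" and "v \<in> V1"
  shows "(u \<in> A1 \<longleftrightarrow> v \<in> A1) \<longleftrightarrow> (f u \<in> A2 \<longleftrightarrow> f v \<in> A2)"
proof -
  have "(adj E1)\<^sup>*\<^sup>* u v" using c1 assms(5,6) unfolding connected_graph_def by blast
  then show ?thesis using \<open>v \<in> V1\<close>
  proof (induction rule: rtranclp_induct)
    case (step y z)
    from step.hyps(2) have yz: "{y, z} \<in> E1" by (simp add: adj_def)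
    from bipartite_withD(1)[OF b1] yz have "y \<in> V1"
      by (elim graph_edge_cases) (auto simp: doubleton_eq_iff)
    then have "{f y, f z} \<in> E2" using graph_iso_mapD(2)[OF iso] step.prems yz by blast
    then show ?case
      using step.IH[OF \<open>y \<in> V1\<close>] bipartite_with_edge_crosses[OF b1 yz]
        bipartite_with_edge_crosses[OF b2] by blast
  qed simp
qed

definition nbhd :: "'v set \<Rightarrow> 'v set set \<Rightarrow> 'v \<Rightarrow> 'v set" where
  "nbhd V E v = {w \<in> V. {v, w} \<in> E}"

definition high_degree :: "'v set \<Rightarrow> 'v set set \<Rightarrow> 'v \<Rightarrow> bool" where
  "high_degree V E v \<longleftrightarrow> (\<exists>S \<subseteq> nbhd V E v. card S = 3)"

definition common_low_nbr :: "'v set \<Rightarrow> 'v set set \<Rightarrow> 'v \<Rightarrow> 'v \<Rightarrow> bool" where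
  "common_low_nbr V E u w \<longleftrightarrow> (\<exists>c \<in> nbhd V E u \<inter> nbhd V E w. \<not> high_degree V E c)"

lemma high_degreeI:
  assumes "3 \<le> card C" and "C \<subseteq> nbhd V E v"
  shows "high_degree V E v"
proof -
  obtain S where "S \<subseteq> C" "card S = 3" using obtain_subset_with_card_n[OF assms(1)] .
  then show ?thesis using assms(2) unfolding high_degree_def by blast
qed

lemma not_high_degreeI:
  assumes "finite (nbhd V E v)" and "card (nbhd V E v) < 3"
  shows "\<not> high_degree V E v"
proof
  assume "high_degree V E v"
  then obtain S where "S \<subseteq> nbhd V E v" "card S = 3" unfolding high_degree_def by blast
  then show False using card_mono[OF assms(1) \<open>S \<subseteq> nbhd V E v\<close>] assms(2) by simp
qed

lemma nbhd_subset: "nbhd V E v \<subseteq> V"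
  unfolding nbhd_def by blast

lemma nbhd_graph_iso_map:
  assumes iso: "graph_iso_map h V1 E1 V2 E2" and "v \<in> V1"
  shows "nbhd V2 E2 (h v) = h ` nbhd V1 E1 v"
proof -
  have "nbhd V2 E2 (h v) = {w \<in> h ` V1. {h v, w} \<in> E2}"
    using bij_betw_imp_surj_on[OF graph_iso_mapD(1)[OF iso]] by (simp add: nbhd_def)
  also have "\<dots> = h ` nbhd V1 E1 v"
    using graph_iso_mapD(2)[OF iso \<open>v \<in> V1\<close>] by (auto simp: nbhd_def)
  finally show ?thesis .
qed

lemma high_degree_graph_iso_map:
  assumes iso: "graph_iso_map h V1 E1 V2 E2" and "v \<in> V1"
  shows "high_degree V2 E2 (h v) \<longleftrightarrow> high_degree V1 E1 v"
proof -
  have inj: "inj_on h (nbhd V1 E1 v)"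
    using bij_betw_imp_inj_on[OF graph_iso_mapD(1)[OF iso]] nbhd_subset by (rule inj_on_subset)
  have card_eq: "card (h ` T) = card T" if "T \<subseteq> nbhd V1 E1 v" for T
    using inj_on_subset[OF inj that] by (rule card_image)
  show ?thesis
  proof
    assume "high_degree V2 E2 (h v)"
    then obtain S where "S \<subseteq> h ` nbhd V1 E1 v" "card S = 3"
      unfolding high_degree_def nbhd_graph_iso_map[OF assms] by blast
    moreover from this(1) obtain T where "T \<subseteq> nbhd V1 E1 v" "S = h ` T" by (rule subset_imageE)
    ultimately show "high_degree V1 E1 v"
      unfolding high_degree_def using card_eq by (intro exI[of _ T]) simp
  next
    assume "high_degree V1 E1 v"
    then obtain T where "T \<subseteq> nbhd V1 E1 v" "card T = 3" unfolding high_degree_def by blast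
    then show "high_degree V2 E2 (h v)"
      unfolding high_degree_def nbhd_graph_iso_map[OF assms] using card_eq
      by (intro exI[of _ "h ` T"]) (simp add: image_mono)
  qed
qed

lemma common_low_nbr_graph_iso_map:
  assumes iso: "graph_iso_map h V1 E1 V2 E2" and "u \<in> V1" and "w \<in> V1"
  shows "common_low_nbr V2 E2 (h u) (h w) \<longleftrightarrow> common_low_nbr V1 E1 u w"
proof -
  let ?I = "nbhd V1 E1 u \<inter> nbhd V1 E1 w"
  have inj: "inj_on h V1" using graph_iso_mapD(1)[OF iso] by (rule bij_betw_imp_inj_on)
  have "h ` ?I = h ` nbhd V1 E1 u \<inter> h ` nbhd V1 E1 w"
    using inj nbhd_subset nbhd_subset by (rule inj_on_image_Int)
  then have I: "nbhd V2 E2 (h u) \<inter> nbhd V2 E2 (h w) = h ` ?I"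
    by (simp only: nbhd_graph_iso_map[OF iso assms(2)] nbhd_graph_iso_map[OF iso assms(3)])
  have hd: "high_degree V2 E2 (h c) \<longleftrightarrow> high_degree V1 E1 c" if "c \<in> ?I" for c
  proof -
    have "c \<in> V1" using that nbhd_subset[of V1 E1 u] by blast
    then show ?thesis by (rule high_degree_graph_iso_map[OF iso])
  qed
  have "(\<exists>c \<in> h ` ?I. \<not> high_degree V2 E2 c) \<longleftrightarrow> (\<exists>c \<in> ?I. \<not> high_degree V2 E2 (h c))"
    by blast
  also have "\<dots> \<longleftrightarrow> (\<exists>c \<in> ?I. \<not> high_degree V1 E1 c)"
    using hd by (intro bex_cong) simp_all
  finally show ?thesis unfolding common_low_nbr_def I .
qed

lemma graph_iso_map_image_high_degree:
  assumes iso: "graph_iso_map h V1 E1 V2 E2"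
  shows "h ` {v \<in> V1. high_degree V1 E1 v} = {v \<in> V2. high_degree V2 E2 v}"
proof -
  have "h ` {v \<in> V1. high_degree V1 E1 v} = h ` {v \<in> V1. high_degree V2 E2 (h v)}"
    by (intro arg_cong[where f = "image h"] Collect_cong conj_cong refl)
      (simp add: high_degree_graph_iso_map[OF iso])
  also have "\<dots> = {v \<in> h ` V1. high_degree V2 E2 v}" by (rule Compr_image_eq[symmetric])
  also have "\<dots> = {v \<in> V2. high_degree V2 E2 v}"
    using bij_betw_imp_surj_on[OF graph_iso_mapD(1)[OF iso]] by simp
  finally show ?thesis .
qed

lemma H_verts_eq:
  assumes "bipartite_with V E A B"
  shows "H_verts A B E = Inl ` V \<union> Inr ` E"
  unfolding H_verts_def bipartite_withD(3)[OF assms] ..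

lemma H_edge_Inl_Inl: "{Inl x, Inl y} \<in> H_edges A B E \<longleftrightarrow> x \<in> A \<and> y \<in> B \<or> y \<in> A \<and> x \<in> B"
  unfolding H_edges_def by (auto simp: doubleton_eq_iff)

lemma H_edge_Inl_Inr: "{Inl x, Inr e} \<in> H_edges A B E \<longleftrightarrow> e \<in> E \<and> x \<in> e"
  unfolding H_edges_def by (auto simp: doubleton_eq_iff)

lemma H_edge_Inr_Inl: "{Inr e, Inl x} \<in> H_edges A B E \<longleftrightarrow> e \<in> E \<and> x \<in> e"
  unfolding H_edges_def by (auto simp: doubleton_eq_iff)

lemma H_edge_Inr_Inr: "{Inr e, Inr e'} \<notin> H_edges A B E"
  unfolding H_edges_def by (auto simp: doubleton_eq_iff)

lemma H_edge_Inl_Inl_iff_sides: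
  assumes "bipartite_with V E A B" and "x \<in> V" and "y \<in> V"
  shows "{Inl x, Inl y} \<in> H_edges A B E \<longleftrightarrow> (x \<in> A \<longleftrightarrow> y \<notin> A)"
  using assms(2,3) bipartite_withD(2,3)[OF assms(1)] unfolding H_edge_Inl_Inl by blast

lemma nbhd_H_Inr:
  assumes "bipartite_with V E A B" and "e \<in> E"
  shows "nbhd (H_verts A B E) (H_edges A B E) (Inr e) = Inl ` e"
proof -
  have adj: "{Inr e, w} \<in> H_edges A B E \<longleftrightarrow> w \<in> Inl ` e" for w
    using assms(2) by (cases w) (auto simp: H_edge_Inr_Inl H_edge_Inr_Inr)
  have "e \<subseteq> A \<union> B" using assms by (elim bipartite_with_edgeE) auto
  then have "Inl ` e \<subseteq> H_verts A B E" unfolding H_verts_def by blast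
  then show ?thesis unfolding nbhd_def adj by blast
qed

lemma nbhd_H_Inl_A: "x \<in> A \<Longrightarrow> Inl ` B \<subseteq> nbhd (H_verts A B E) (H_edges A B E) (Inl x)"
  by (auto simp: nbhd_def H_verts_def H_edge_Inl_Inl)

lemma nbhd_H_Inl_B: "x \<in> B \<Longrightarrow> Inl ` A \<subseteq> nbhd (H_verts A B E) (H_edges A B E) (Inl x)"
  by (auto simp: nbhd_def H_verts_def H_edge_Inl_Inl)

lemma H_high_degree_verts:
  assumes bip: "bipartite_with V E A B" and "3 \<le> card A" and "3 \<le> card B"
  shows "{v \<in> H_verts A B E. high_degree (H_verts A B E) (H_edges A B E) v} = Inl ` V"
proof (intro equalityI subsetI)
  fix v assume "v \<in> {v \<in> H_verts A B E. high_degree (H_verts A B E) (H_edges A B E) v}"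
  then have v: "v \<in> Inl ` V \<union> Inr ` E" and high: "high_degree (H_verts A B E) (H_edges A B E) v"
    using H_verts_eq[OF bip] by auto
  show "v \<in> Inl ` V"
  proof (rule ccontr)
    assume "v \<notin> Inl ` V"
    then obtain e where "e \<in> E" "v = Inr e" using v by blast
    moreover obtain a b where "e = {a, b}" using bip \<open>e \<in> E\<close> by (rule bipartite_with_edgeE)
    ultimately have "\<not> high_degree (H_verts A B E) (H_edges A B E) v"
      by (intro not_high_degreeI) (simp_all add: nbhd_H_Inr[OF bip] card_insert_if)
    with high show False by contradiction
  qed
next
  fix v :: "'a + 'a set" assume "v \<in> Inl ` V"
  then obtain x where v: "v = Inl x" and "x \<in> A \<or> x \<in> B"
    using bipartite_withD(3)[OF bip] by blast
  from \<open>x \<in> A \<or> x \<in> B\<close> have "high_degree (H_verts A B E) (H_edges A B E) v"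
  proof
    assume "x \<in> A"
    show ?thesis
      using nbhd_H_Inl_A[of x A B E] \<open>x \<in> A\<close> assms(3) unfolding v
      by (intro high_degreeI) (simp_all add: card_image)
  next
    assume "x \<in> B"
    show ?thesis
      using nbhd_H_Inl_B[of x B A E] \<open>x \<in> B\<close> assms(2) unfolding v
      by (intro high_degreeI) (simp_all add: card_image)
  qed
  then show "v \<in> {v \<in> H_verts A B E. high_degree (H_verts A B E) (H_edges A B E) v}"
    using \<open>v \<in> Inl ` V\<close> H_verts_eq[OF bip] by blast
qed

lemma H_common_low_nbr_iff:
  assumes bip: "bipartite_with V E A B" and "3 \<le> card A" and "3 \<le> card B" and "x \<noteq> y"
  shows "common_low_nbr (H_verts A B E) (H_edges A B E) (Inl x) (Inl y) \<longleftrightarrow> {x, y} \<in> E"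
proof -
  let ?HV = "H_verts A B E" and ?HE = "H_edges A B E"
  have low: "c \<in> ?HV \<and> \<not> high_degree ?HV ?HE c \<longleftrightarrow> c \<in> Inr ` E" for c
    using H_high_degree_verts[OF assms(1-3)] H_verts_eq[OF bip] by blast
  have "common_low_nbr ?HV ?HE (Inl x) (Inl y) \<longleftrightarrow>
        (\<exists>c \<in> Inr ` E. {Inl x, c} \<in> ?HE \<and> {Inl y, c} \<in> ?HE)"
    unfolding common_low_nbr_def nbhd_def using low by blast
  also have "\<dots> \<longleftrightarrow> (\<exists>e \<in> E. x \<in> e \<and> y \<in> e)"
    by (simp add: H_edge_Inl_Inr)
  also have "\<dots> \<longleftrightarrow> {x, y} \<in> E"
  proof
    assume "\<exists>e \<in> E. x \<in> e \<and> y \<in> e"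
    then obtain e where "e \<in> E" "x \<in> e" "y \<in> e" by blast
    moreover obtain a b where "e = {a, b}" using bip \<open>e \<in> E\<close> by (rule bipartite_with_edgeE)
    ultimately have "e = {x, y}" using \<open>x \<noteq> y\<close> by blast
    with \<open>e \<in> E\<close> show "{x, y} \<in> E" by simp
  qed blast
  finally show ?thesis .
qed

lemma H_iso_of_graph_iso_map:
  assumes b1: "bipartite_with V1 E1 A1 B1" and c1: "connected_graph V1 E1"
    and b2: "bipartite_with V2 E2 A2 B2" and iso: "graph_iso_map f V1 E1 V2 E2"
  shows "graph_iso_map (map_sum f (image f))
           (H_verts A1 B1 E1) (H_edges A1 B1 E1) (H_verts A2 B2 E2) (H_edges A2 B2 E2)"
proof -
  have g1: "graph V1 E1" and g2: "graph V2 E2"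
    using bipartite_withD(1)[OF b1] bipartite_withD(1)[OF b2] .
  have bij: "bij_betw f V1 V2" by (rule graph_iso_mapD(1)[OF iso])
  have inj: "inj_on f V1" using bij by (rule bij_betw_imp_inj_on)
  have E1_Pow: "E1 \<subseteq> Pow V1" using g1 by (auto elim: graph_edge_cases)
  have E2_eq: "image f ` E1 = E2" by (rule graph_iso_map_image_edges[OF g1 g2 iso])
  have "bij_betw (image f) E1 E2"
    unfolding bij_betw_def using inj_on_subset[OF inj_on_image_Pow[OF inj] E1_Pow] E2_eq by blast
  with bij have bij_H: "bij_betw (map_sum f (image f)) (H_verts A1 B1 E1) (H_verts A2 B2 E2)"
    unfolding H_verts_eq[OF b1] H_verts_eq[OF b2] by (rule bij_betw_map_sum)
  have VV: "{Inl x, Inl y} \<in> H_edges A1 B1 E1 \<longleftrightarrow> {Inl (f x), Inl (f y)} \<in> H_edges A2 B2 E2"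
    if "x \<in> V1" and "y \<in> V1" for x y
  proof -
    have "f x \<in> V2" "f y \<in> V2" using that bij_betw_apply[OF bij] by blast+
    then show ?thesis
      using H_edge_Inl_Inl_iff_sides[OF b1 that] H_edge_Inl_Inl_iff_sides[OF b2]
        graph_iso_map_same_side[OF b1 c1 b2 iso that] by blast
  qed
  have VE: "f ` e \<in> E2" "f x \<in> f ` e \<longleftrightarrow> x \<in> e" if "x \<in> V1" and "e \<in> E1" for x e
    using that E2_eq E1_Pow inj_on_image_mem_iff[OF inj] by blast+
  have "{u, v} \<in> H_edges A1 B1 E1 \<longleftrightarrow>
      {map_sum f (image f) u, map_sum f (image f) v} \<in> H_edges A2 B2 E2"
    if "u \<in> Inl ` V1 \<union> Inr ` E1" and "v \<in> Inl ` V1 \<union> Inr ` E1" for u v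
    using that by (elim UnE imageE)
      (simp_all add: VV VE H_edge_Inl_Inr H_edge_Inr_Inl H_edge_Inr_Inr)
  with bij_H show ?thesis
    unfolding graph_iso_map_def H_verts_eq[OF b1] by blast
qed

lemma graph_iso_map_of_H_iso:
  assumes b1: "bipartite_with V1 E1 A1 B1" and "3 \<le> card A1" and "3 \<le> card B1"
    and b2: "bipartite_with V2 E2 A2 B2" and "3 \<le> card A2" and "3 \<le> card B2"
    and iso: "graph_iso_map h (H_verts A1 B1 E1) (H_edges A1 B1 E1) (H_verts A2 B2 E2) (H_edges A2 B2 E2)"
  shows "graph_iso_map (projl \<circ> h \<circ> Inl) V1 E1 V2 E2"
proof -
  let ?f = "projl \<circ> h \<circ> Inl"
  have hV: "h ` Inl ` V1 = Inl ` V2"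
    using graph_iso_map_image_high_degree[OF iso]
    by (simp only: H_high_degree_verts[OF b1 assms(2,3)] H_high_degree_verts[OF b2 assms(5,6)])
  have hf: "h (Inl x) = Inl (?f x)" if "x \<in> V1" for x
  proof -
    have "h (Inl x) \<in> Inl ` V2" using that hV by blast
    then show ?thesis by auto
  qed
  have "bij_betw Inl V1 (Inl ` V1)" by (simp add: bij_betw_def)
  moreover have "bij_betw h (Inl ` V1) (Inl ` V2)"
    using graph_iso_mapD(1)[OF iso] _ hV by (rule bij_betw_subset) (simp add: H_verts_eq[OF b1])
  moreover have "bij_betw projl (Inl ` V2) V2" by (simp add: bij_betw_def inj_on_def image_image)
  ultimately have bij: "bij_betw ?f V1 V2" by (intro bij_betw_trans)
  have "{u, v} \<in> E1 \<longleftrightarrow> {?f u, ?f v} \<in> E2" if "u \<in> V1" and "v \<in> V1" for u v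
  proof (cases "u = v")
    case True
    with graph_singleton_notin_edges[OF bipartite_withD(1)[OF b1]]
      graph_singleton_notin_edges[OF bipartite_withD(1)[OF b2]] show ?thesis by simp
  next
    case False
    then have "?f u \<noteq> ?f v" using that bij by (metis bij_betw_imp_inj_on inj_on_eq_iff)
    have "Inl u \<in> H_verts A1 B1 E1" "Inl v \<in> H_verts A1 B1 E1"
      using that by (simp_all add: H_verts_eq[OF b1])
    then have "{u, v} \<in> E1 \<longleftrightarrow>
        common_low_nbr (H_verts A2 B2 E2) (H_edges A2 B2 E2) (h (Inl u)) (h (Inl v))"
      by (simp add: common_low_nbr_graph_iso_map[OF iso] H_common_low_nbr_iff[OF b1 assms(2,3) False])
    also have "\<dots> \<longleftrightarrow> {?f u, ?f v} \<in> E2"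
      by (simp only: hf that H_common_low_nbr_iff[OF b2 assms(5,6) \<open>?f u \<noteq> ?f v\<close>])
    finally show ?thesis .
  qed
  with bij show ?thesis unfolding graph_iso_map_def by blast
qed

theorem mainTheorem4:
  fixes V1 A1 B1 :: "'a set" and E1 :: "'a set set"
    and V2 A2 B2 :: "'b set" and E2 :: "'b set set"
  assumes "bipartite_with V1 E1 A1 B1" and "connected_graph V1 E1"
    and "card A1 \<ge> 3" and "card B1 \<ge> 3"
    and "bipartite_with V2 E2 A2 B2" and "connected_graph V2 E2"
    and "card A2 \<ge> 3" and "card B2 \<ge> 3"
  shows "graph_iso V1 E1 V2 E2 \<longleftrightarrow>
         graph_iso (H_verts A1 B1 E1) (H_edges A1 B1 E1) (H_verts A2 B2 E2) (H_edges A2 B2 E2)"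
  using H_iso_of_graph_iso_map[OF assms(1,2,5)] graph_iso_map_of_H_iso[OF assms(1,3,4,5,7,8)]
  unfolding graph_iso_iff_graph_iso_map by blast

end
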